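(* Assume (A1), (A2) and (A3), and let $\alpha>0$ be arbitrary. Along every trajectory of the algorithm described in the context, for all $k\ge0$, $$V_{\bar x}(k+1)-V_{\bar x}(k)\le-l\|\bm e_{\bar x}(k)\|^2+\beta_{\bar x\psi}\|\bm e_\psi(k)\|^2+\beta_{\bar x\xi}\|\bm e_\xi(k)\|^2+\alpha\max_ib_{1i}\big(\|\bm e_\psi(k)\|^2+\|\bm e_\xi(k)\|^2+N\|\bm e_{\bar x}(k)\|^2\big).$$
   Context: Game. $N$ coalitions; coalition $i$ has agents $i1,\dots,in_i$; $\mathcal V_i=\{i1,\dots,in_i\}$, $\mathcal V=\bigcup_i\mathcal V_i$, $n_{\mathrm{sum}}=\sum_in_i$; agents ordered lexicographically. Agent $ij$ has state $x_{ij}\in\mathbb{R}$; $\bm x_i=(x_{i1},\dots,x_{in_i})^T$, $\bm x=(\bm x_1^T,\dots,\bm x_N^T)^T$. Costs $f_{ij}:\mathbb{R}^{n_{\mathrm{sum}}}\to\mathbb{R}$, $f_i=\sum_jf_{ij}$. For $\bm y\in\mathbb{R}^N$, $g_i(\bm y)=f_i((y_1\mathbf 1_{n_1}^T,\dots,y_N\mathbf 1_{n_N}^T)^T)$, $\mathcal Q(\bm y)=(\partial g_i/\partial y_i(\bm y))_{i=1}^N$; $\bm y^*$ is the (unique) Nash equilibrium of the game $\min_{y_i}g_i(\bm y)$, $i=1,\dots,N$. Graph. Directed graph $\mathcal G=(\mathcal V,\mathcal E)$, $(pq,ij)\in\mathcal E$ meaning $ij$ receives from $pq$. $a_{ij}^{pq}=1$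 if $(pq,ij)\in\mathcal E$, $pq\ne ij$, else $0$; $d_{ij}=\sum_{pq}a_{ij}^{pq}$. $\mathcal G_i$: subgraph induced on $\mathcal V_i$. $\mathcal N_{ij}^{\mathrm{in}}$, $\mathcal N_{ij}^{i\text{-in}}$, $\mathcal N_{ij}^{i\text{-out}}$: in-neighbors in $\mathcal G$, in-neighbors and out-neighbors in $\mathcal G_i$. Assumptions. (A1) $\mathcal G$ and every $\mathcal G_i$ are strongly connected. (A2) each $f_{ij}$ is convex, $C^2$, with $\nabla f_{ij}$ Lipschitz of constant $l_{ij}$. (A3) $\exists l>0$: $(\bm a-\bm b)^T(\mathcal Q(\bm a)-\mathcal Q(\bm b))\ge l\|\bm a-\bm b\|^2$ for all $\bm a,\bm b\in\mathbb{R}^N$. Algorithm. Weights $r_{ij}^{im}>0$ for $im\in\mathcal N_{ij}^{i\text{-in}}\cup\{ij\}$ summing to 1, $c_{im}^{ij}>0$ for $im\in\mathcal N_{ij}^{i\text{-out}}\cup\{ij\}$ summing to 1, other within-coalition weights $0$; $R_i=[r_{ij}^{im}]$, $C_i=[c_{ij}^{im}]$ ($j$ row, $m$ column). Step size $\alpha>0$. Initialization: $x_{ij}(0),\bm\xi_{ij}(0)\in\mathbb{R}^{n_{\mathrm{sum}}}$ arbitrary, $\psi_{ij}^{il}(0)=\frac{\partial f_{ij}}{\partial x_{il}}(\bm\xi_{ij}(0))$. For $k\ge0$: $x_{ij}(k+1)=\sum_mr_{ij}^{im}x_{im}(k)-\frac{\alpha}{n_i}\sum_{m=1}^{n_i}\psi_{ij}^{im}(k)$;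 $\xi_{ij}^{pq}(k+1)=\xi_{ij}^{pq}(k)-\frac1{d_{ij}+a_{ij}^{pq}}\big(\sum_{lm\in\mathcal N_{ij}^{\mathrm{in}}}(\xi_{ij}^{pq}(k)-\xi_{lm}^{pq}(k))+a_{ij}^{pq}(\xi_{ij}^{pq}(k)-x_{pq}(k))\big)$ for all $pq\in\mathcal V$; $\psi_{ij}^{il}(k+1)=\sum_mc_{ij}^{im}\psi_{im}^{il}(k)+\frac{\partial f_{ij}}{\partial x_{il}}(\bm\xi_{ij}(k+1))-\frac{\partial f_{ij}}{\partial x_{il}}(\bm\xi_{ij}(k))$. Auxiliary quantities. $u_i$: $u_i^TR_i=u_i^T$, $u_i^T\mathbf 1_{n_i}=n_i$; $v_i$: $C_iv_i=v_i$, $\mathbf 1_{n_i}^Tv_i=n_i$. Constants: $\beta_{\bar x\psi}=\frac2l\max_i\frac{n_i^3\|u_i\|^2}{(u_i^Tv_i)^2}$, $\beta_{\bar x\xi}=\frac2l\max_i\{n_i\sum_{j=1}^{n_i}l_{ij}^2\}$, $b_{0i}=n_i+(\frac1{n_i}+\max_kn_k)\|v_i\|^2\sum_{j=1}^{n_i}l_{ij}^2$, $b_{1i}=\frac{\|u_i\|^2}{n_iu_i^Tv_i}b_{0i}$. Errors and Lyapunov function. $\bm\psi_i=(\psi_{i1}^{i1},\dots,\psi_{i1}^{in_i},\psi_{i2}^{i1},\dots,\psi_{in_i}^{in_i})^T$, $\bar{\bm\psi}_i=\frac1{n_i}(\mathbf 1_{n_i}^T\otimes I_{n_i})\bm\psi_i$,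 $\bm e_{\psi_i}=\bm\psi_i-v_i\otimes\bar{\bm\psi}_i$. $\bar x_i=u_i^T\bm x_i/n_i$, $e_{\bar x_i}=\bar x_i-y_i^*$, $\bar{\bm X}=(\bar x_1\mathbf 1_{n_1}^T,\dots,\bar x_N\mathbf 1_{n_N}^T)^T$. $\bm\xi_i=(\bm\xi_{i1}^T,\dots,\bm\xi_{in_i}^T)^T$, $\bm e_{\xi_i}=\bm\xi_i-\mathbf 1_{n_i}\otimes\bar{\bm X}$. $\bm e_\psi,\bm e_{\bar x},\bm e_\xi$: stacks over $i$. $V_{\bar x}(k)=\sum_{i=1}^N\frac{n_i^3}{\alpha u_i^Tv_i}e_{\bar x_i}(k)^2$. *)

theory Defs
  imports "HOL-Analysis.Analysis"
begin

definition pd :: "(real^'n \<Rightarrow> real) \<Rightarrow> 'n \<Rightarrow> real^'n \<Rightarrow> real" where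
  "pd f q p = frechet_derivative f (at p) (axis q 1)"

definition grad :: "(real^'n \<Rightarrow> real) \<Rightarrow> real^'n \<Rightarrow> real^'n" where
  "grad f p = (\<chi> q. pd f q p)"

definition C2 :: "(real^'n \<Rightarrow> real) \<Rightarrow> bool" where
  "C2 f \<longleftrightarrow> (\<forall>p. f differentiable at p) \<and> (\<forall>p. grad f differentiable at p) \<and>
     (\<forall>q r. continuous_on UNIV (\<lambda>p. frechet_derivative (grad f) (at p) (axis q 1) $ r))"

definition agents :: "('v \<Rightarrow> 'c) \<Rightarrow> 'c \<Rightarrow> 'v set" where
  "agents coal i = {v. coal v = i}"

definition nc :: "('v::finite \<Rightarrow> 'c) \<Rightarrow> 'c \<Rightarrow> nat" where
  "nc coal i = card (agents coal i)"

text \<open>Adjacency a_{ij}^{pq}: E contains (pq, ij) iff ij receives from pq.\<close>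
definition adj :: "('v \<times> 'v) set \<Rightarrow> 'v \<Rightarrow> 'v \<Rightarrow> real" where
  "adj E ij pq = (if (pq, ij) \<in> E \<and> pq \<noteq> ij then 1 else 0)"

definition indeg :: "('v::finite \<times> 'v) set \<Rightarrow> 'v \<Rightarrow> real" where
  "indeg E ij = (\<Sum>pq\<in>UNIV. adj E ij pq)"

definition in_nbrs :: "('v \<times> 'v) set \<Rightarrow> 'v \<Rightarrow> 'v set" where
  "in_nbrs E ij = {pq. (pq, ij) \<in> E \<and> pq \<noteq> ij}"

definition coal_in_nbrs :: "('v \<times> 'v) set \<Rightarrow> ('v \<Rightarrow> 'c) \<Rightarrow> 'v \<Rightarrow> 'v set" where
  "coal_in_nbrs E coal ij = {im. coal im = coal ij \<and> (im, ij) \<in> E \<and> im \<noteq> ij}"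

definition coal_out_nbrs :: "('v \<times> 'v) set \<Rightarrow> ('v \<Rightarrow> 'c) \<Rightarrow> 'v \<Rightarrow> 'v set" where
  "coal_out_nbrs E coal ij = {im. coal im = coal ij \<and> (ij, im) \<in> E \<and> im \<noteq> ij}"

definition strongly_connected_on :: "'v set \<Rightarrow> ('v \<times> 'v) set \<Rightarrow> bool" where
  "strongly_connected_on S E \<longleftrightarrow> (\<forall>u\<in>S. \<forall>w\<in>S. (u, w) \<in> (E \<inter> (S \<times> S))\<^sup>*)"

text \<open>Broadcast of y in R^N to the stacked vector (y_1 1^T, ..., y_N 1^T)^T.\<close>
definition bcast :: "('v \<Rightarrow> 'c) \<Rightarrow> real^'c \<Rightarrow> real^'v" where
  "bcast coal y = (\<chi> v. y $ coal v)"

definition gcost :: "('v::finite \<Rightarrow> 'c) \<Rightarrow> ('v \<Rightarrow> real^'v \<Rightarrow> real) \<Rightarrow> 'c \<Rightarrow> real^'c \<Rightarrow> real" where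
  "gcost coal f i y = (\<Sum>v\<in>agents coal i. f v (bcast coal y))"

definition Qmap :: "('v::finite \<Rightarrow> 'c) \<Rightarrow> ('v \<Rightarrow> real^'v \<Rightarrow> real) \<Rightarrow> real^'c \<Rightarrow> real^'c" where
  "Qmap coal f y = (\<chi> i. pd (gcost coal f i) i y)"

definition nash_eq :: "('v::finite \<Rightarrow> 'c) \<Rightarrow> ('v \<Rightarrow> real^'v \<Rightarrow> real) \<Rightarrow> real^'c \<Rightarrow> bool" where
  "nash_eq coal f ys \<longleftrightarrow> (\<forall>i t. gcost coal f i ys \<le> gcost coal f i (ys + (t - ys $ i) *\<^sub>R axis i 1))"

end

theory Submission
  imports Defs
begin

(* The u_i-weighted average xbar_i = u_i' x_i / n_i of a coalition sees no consensus term, because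
   u_i is a left Perron vector of R_i; it moves by -alpha/n_i^2 times the u_i-weighted sum of the
   trackers psi. Since C_i is column stochastic, the trackers of a coalition sum to the partial
   gradients at the estimates xi, so this increment splits into the pseudo-gradient Q(xbar) (which
   vanishes at the Nash equilibrium and is strongly monotone by (A3)), an estimation error in xi
   (controlled by the Lipschitz constants) and the tracking error e_psi. Expanding the square in
   V_xbar, Young's inequality on the two error cross terms and Cauchy-Schwarz on the squared
   increment give the bound; strong connectivity of each G_i makes u_i and v_i positive, so that
   u_i' v_i > 0. *)

section \<open>The pseudo-gradient at a Nash equilibrium\<close>

lemma bounded_linear_bcast: "bounded_linear (bcast coal :: real^'c \<Rightarrow> real^'v)"
proof -
  have "linear (bcast coal :: real^'c \<Rightarrow> real^'v)"
    by (rule linearI) (auto simp: bcast_def vec_eq_iff)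
  then show ?thesis by (simp add: linear_conv_bounded_linear)
qed

lemma gcost_has_derivative:
  fixes coal :: "'v::finite \<Rightarrow> 'c::finite" and f :: "'v \<Rightarrow> real^'v \<Rightarrow> real"
  assumes "\<forall>v p. f v differentiable at p"
  shows "(gcost coal f i has_derivative
     (\<lambda>h. \<Sum>j\<in>agents coal i. frechet_derivative (f j) (at (bcast coal y)) (bcast coal h))) (at y)"
  unfolding gcost_def[abs_def]
proof (intro has_derivative_sum)
  fix j
  have f_deriv: "(f j has_derivative frechet_derivative (f j) (at (bcast coal y))) (at (bcast coal y))"
    using assms frechet_derivative_works by blast
  show "((\<lambda>y. f j (bcast coal y)) has_derivative
      (\<lambda>h. frechet_derivative (f j) (at (bcast coal y)) (bcast coal h))) (at y)"
    using has_derivative_compose[OF bounded_linear_imp_has_derivative[OF bounded_linear_bcast] f_deriv]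
    by (simp add: o_def)
qed

lemma bcast_axis: "bcast coal (axis i 1) = (\<Sum>m\<in>agents coal i. axis m (1::real))"
  by (auto simp: bcast_def vec_eq_iff axis_def agents_def sum_component
     sum.delta[where S="{v. coal v = i}", simplified] if_distrib cong: if_cong)

lemma Qmap_eq_sum_pd:
  fixes coal :: "'v::finite \<Rightarrow> 'c::finite" and f :: "'v \<Rightarrow> real^'v \<Rightarrow> real"
  assumes "\<forall>v p. f v differentiable at p"
  shows "Qmap coal f y $ i = (\<Sum>j\<in>agents coal i. \<Sum>m\<in>agents coal i. pd (f j) m (bcast coal y))"
proof -
  have "Qmap coal f y $ i =
      (\<Sum>j\<in>agents coal i. frechet_derivative (f j) (at (bcast coal y)) (bcast coal (axis i 1)))"
    by (simp add: Qmap_def pd_def flip: frechet_derivative_at[OF gcost_has_derivative[OF assms]])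
  also have "\<dots> = (\<Sum>j\<in>agents coal i. \<Sum>m\<in>agents coal i. pd (f j) m (bcast coal y))"
    using assms by (simp add: bcast_axis pd_def linear_sum linear_frechet_derivative)
  finally show ?thesis .
qed

lemma Qmap_nash_eq_zero:
  fixes coal :: "'v::finite \<Rightarrow> 'c::finite" and f :: "'v \<Rightarrow> real^'v \<Rightarrow> real"
  assumes diff: "\<forall>v p. f v differentiable at p" and NE: "nash_eq coal f ys"
  shows "Qmap coal f ys $ i = 0"
proof -
  let ?F = "\<lambda>h. \<Sum>j\<in>agents coal i. frechet_derivative (f j) (at (bcast coal ys)) (bcast coal h)"
  have g_deriv: "(gcost coal f i has_derivative ?F) (at ys)"
    using gcost_has_derivative[OF diff] .
  have "((\<lambda>t::real. ys + t *\<^sub>R axis i 1) has_derivative (\<lambda>t. t *\<^sub>R axis i 1)) (at 0)"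
    by (auto intro!: derivative_eq_intros)
  from has_derivative_compose[OF this, of "gcost coal f i" ?F] g_deriv
  have "((\<lambda>t. gcost coal f i (ys + t *\<^sub>R axis i 1)) has_derivative (\<lambda>t. ?F (t *\<^sub>R axis i 1))) (at 0)"
    by (simp add: o_def)
  moreover have "\<forall>\<^sub>F t in at 0. gcost coal f i (ys + 0 *\<^sub>R axis i 1) \<le> gcost coal f i (ys + t *\<^sub>R axis i 1)"
    using NE unfolding nash_eq_def by (intro always_eventually allI) (metis add_diff_cancel_right' add.right_neutral scale_zero_left)
  ultimately have "(\<lambda>t. ?F (t *\<^sub>R axis i 1)) = (\<lambda>_. 0)"
    by (rule has_derivative_local_min)
  then have "?F (axis i 1) = 0"
    by (metis scaleR_one)
  then show ?thesis
    by (simp add: Qmap_def pd_def flip: frechet_derivative_at[OF g_deriv])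
qed

section \<open>Positive Perron vectors and tracking\<close>

lemma fixed_vector_zero_propagates:
  fixes A :: "'a \<Rightarrow> 'a \<Rightarrow> real"
  assumes "finite S"
    and nonneg: "\<forall>j\<in>S. \<forall>m\<in>S. A j m \<ge> 0"
    and edges: "\<forall>j\<in>S. \<forall>m\<in>S. (m, j) \<in> E \<longrightarrow> m \<noteq> j \<longrightarrow> A j m > 0"
    and p_nonneg: "\<forall>j\<in>S. p j \<ge> 0"
    and p_fixed: "\<forall>m\<in>S. (\<Sum>j\<in>S. p j * A j m) = p m"
    and path: "(a, b) \<in> (E \<inter> S \<times> S)\<^sup>*" and "p a = 0"
  shows "p b = 0"
  using path
proof (induction rule: rtrancl_induct)
  case base
  show ?case by fact
next
  case (step y z)
  then have yz: "y \<in> S" "z \<in> S" "(y, z) \<in> E" by auto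
  have "(\<Sum>j\<in>S. p j * A j y) = 0"
    using p_fixed yz step.IH by simp
  moreover have "\<forall>j\<in>S. p j * A j y \<ge> 0"
    using nonneg p_nonneg yz by simp
  ultimately have "p z * A z y = 0"
    using sum_nonneg_eq_0_iff[OF \<open>finite S\<close>, of "\<lambda>j. p j * A j y"] yz by blast
  moreover have "y = z \<or> A z y > 0"
    using edges yz by blast
  ultimately show ?case
    using step.IH by auto
qed

lemma stochastic_fixed_vector_pos_part:
  fixes A :: "'a \<Rightarrow> 'a \<Rightarrow> real"
  assumes fin: "finite S"
    and nonneg: "\<forall>j\<in>S. \<forall>m\<in>S. A j m \<ge> 0"
    and rows: "\<forall>j\<in>S. (\<Sum>m\<in>S. A j m) = 1"
    and u_fixed: "\<forall>m\<in>S. (\<Sum>j\<in>S. u j * A j m) = u m"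
  shows "\<forall>m\<in>S. (\<Sum>j\<in>S. max (u j) 0 * A j m) = max (u m) 0"
proof -
  define p where "p j = max (u j) 0" for j
  \<comment> \<open>p is sub-invariant and A preserves its mass, so it is invariant.\<close>
  have p_sub: "p m \<le> (\<Sum>j\<in>S. p j * A j m)" if "m \<in> S" for m
proof -
    have "u m \<le> (\<Sum>j\<in>S. p j * A j m)"
      unfolding u_fixed[rule_format, OF that, symmetric] p_def
      using nonneg that by (intro sum_mono mult_right_mono) auto
    moreover have "0 \<le> (\<Sum>j\<in>S. p j * A j m)"
      using nonneg that by (intro sum_nonneg) (simp add: p_def)
    ultimately show ?thesis
      by (simp add: p_def)
  qed
  have "(\<Sum>m\<in>S. \<Sum>j\<in>S. p j * A j m) = (\<Sum>j\<in>S. p j * (\<Sum>m\<in>S. A j m))"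
    by (subst sum.swap) (simp add: sum_distrib_left)
  also have "\<dots> = sum p S"
    using rows by simp
  finally have "(\<Sum>m\<in>S. (\<Sum>j\<in>S. p j * A j m) - p m) = 0"
    by (simp add: sum_subtractf)
  then have "\<forall>m\<in>S. (\<Sum>j\<in>S. p j * A j m) - p m = 0"
    using p_sub by (simp add: sum_nonneg_eq_0_iff[OF fin])
  then show ?thesis
    by (simp add: p_def)
qed

lemma stochastic_fixed_vector_pos:
  fixes A :: "'a \<Rightarrow> 'a \<Rightarrow> real"
  assumes fin: "finite S"
    and nonneg: "\<forall>j\<in>S. \<forall>m\<in>S. A j m \<ge> 0"
    and edges: "\<forall>j\<in>S. \<forall>m\<in>S. (m, j) \<in> E \<longrightarrow> m \<noteq> j \<longrightarrow> A j m > 0"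
    and conn: "strongly_connected_on S E"
    and rows: "\<forall>j\<in>S. (\<Sum>m\<in>S. A j m) = 1"
    and u_fixed: "\<forall>m\<in>S. (\<Sum>j\<in>S. u j * A j m) = u m"
    and sum_pos: "sum u S > 0"
    and "m \<in> S"
  shows "u m > 0"
proof -
  have vanish: "\<forall>b\<in>S. p b = 0"
    if "\<forall>j\<in>S. p j \<ge> 0" "\<forall>m\<in>S. (\<Sum>j\<in>S. p j * A j m) = p m" "a \<in> S" "p a = 0" for p a
  proof
    fix b assume "b \<in> S"
    then have "(a, b) \<in> (E \<inter> S \<times> S)\<^sup>*"
      using conn that(3) unfolding strongly_connected_on_def by blast
    then show "p b = 0"
      by (rule fixed_vector_zero_propagates[OF fin nonneg edges that(1,2) _ that(4)])
  qed
  define p where "p j = max (u j) 0" for j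
  have p_fixed: "\<forall>m\<in>S. (\<Sum>j\<in>S. p j * A j m) = p m"
    unfolding p_def by (rule stochastic_fixed_vector_pos_part[OF fin nonneg rows u_fixed])
  \<comment> \<open>The negative part p - u is invariant too and vanishes where u > 0, hence everywhere.\<close>
  have "\<forall>m\<in>S. (\<Sum>j\<in>S. (p j - u j) * A j m) = p m - u m"
    using p_fixed u_fixed by (simp add: left_diff_distrib sum_subtractf)
  moreover obtain a where "a \<in> S" "u a > 0"
    using sum_pos sum_nonpos[of S u] by (meson not_le)
  ultimately have "\<forall>b\<in>S. p b - u b = 0"
    using vanish[of "\<lambda>j. p j - u j" a] by (simp add: p_def)
  then have u_eq_p: "\<forall>b\<in>S. u b = p b"
    by simp
  show "u m > 0"
  proof (rule ccontr)
    assume "\<not> u m > 0"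
    then have "\<forall>b\<in>S. p b = 0"
      using vanish[of p m] p_fixed \<open>m \<in> S\<close> by (simp add: p_def)
    then show False
      using sum_pos u_eq_p by simp
  qed
qed

lemma strongly_connected_on_converse:
  assumes "strongly_connected_on S E"
  shows "strongly_connected_on S (E\<inverse>)"
proof -
  have "E\<inverse> \<inter> S \<times> S = (E \<inter> S \<times> S)\<inverse>"
    by auto
  then show ?thesis
    using assms by (simp add: strongly_connected_on_def rtrancl_converse)
qed

lemma coal_out_nbrs_eq_coal_in_nbrs_converse: "coal_out_nbrs E coal = coal_in_nbrs (E\<inverse>) coal"
  by (auto simp: coal_out_nbrs_def coal_in_nbrs_def)

lemma agents_coal_eq: "j \<in> agents coal i \<Longrightarrow> agents coal (coal j) = agents coal i"
  by (simp add: agents_def)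

lemma coalition_fixed_vector_pos:
  fixes coal :: "'v::finite \<Rightarrow> 'c" and a :: "'v \<Rightarrow> 'v \<Rightarrow> real"
  assumes conn: "strongly_connected_on (agents coal i) E"
    and pos: "\<forall>ij im. coal im = coal ij \<longrightarrow> im \<in> coal_in_nbrs E coal ij \<union> {ij} \<longrightarrow> a ij im > 0"
    and zero: "\<forall>ij im. coal im = coal ij \<longrightarrow> im \<notin> coal_in_nbrs E coal ij \<union> {ij} \<longrightarrow> a ij im = 0"
    and rows: "\<forall>ij. (\<Sum>im\<in>agents coal (coal ij). a ij im) = 1"
    and fixed: "\<forall>im. (\<Sum>ij\<in>agents coal (coal im). u ij * a ij im) = u im"
    and sum_pos: "sum u (agents coal i) > 0"
    and "m \<in> agents coal i"
  shows "u m > 0"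
proof (rule stochastic_fixed_vector_pos[OF _ _ _ conn _ _ sum_pos \<open>m \<in> agents coal i\<close>])
  show "finite (agents coal i)"
    by simp
  show "\<forall>j\<in>agents coal i. \<forall>m\<in>agents coal i. 0 \<le> a j m"
    using pos zero by (simp add: agents_def) (metis less_eq_real_def)
  show "\<forall>j\<in>agents coal i. \<forall>m\<in>agents coal i. (m, j) \<in> E \<longrightarrow> m \<noteq> j \<longrightarrow> 0 < a j m"
    using pos by (simp add: agents_def coal_in_nbrs_def)
  show "\<forall>j\<in>agents coal i. (\<Sum>m\<in>agents coal i. a j m) = 1"
    using rows agents_coal_eq[of _ coal i] by metis
  show "\<forall>m\<in>agents coal i. (\<Sum>j\<in>agents coal i. u j * a j m) = u m"
    using fixed agents_coal_eq[of _ coal i] by metis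
qed

lemma column_stochastic_tracking:
  fixes c :: "'a \<Rightarrow> 'a \<Rightarrow> real"
  assumes cols: "\<forall>m\<in>S. (\<Sum>j\<in>S. c j m) = 1"
    and init: "\<forall>j\<in>S. \<psi> 0 j = g 0 j"
    and upd: "\<forall>k. \<forall>j\<in>S. \<psi> (Suc k) j = (\<Sum>m\<in>S. c j m * \<psi> k m) + g (Suc k) j - g k j"
  shows "(\<Sum>j\<in>S. \<psi> k j) = (\<Sum>j\<in>S. g k j)"
proof (induction k)
  case 0
  show ?case
    using init by simp
next
  case (Suc k)
  have "(\<Sum>j\<in>S. \<Sum>m\<in>S. c j m * \<psi> k m) = (\<Sum>m\<in>S. (\<Sum>j\<in>S. c j m) * \<psi> k m)"
    by (subst sum.swap) (simp add: sum_distrib_right)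
  also have "\<dots> = (\<Sum>m\<in>S. \<psi> k m)"
    using cols by simp
  finally have "(\<Sum>j\<in>S. \<Sum>m\<in>S. c j m * \<psi> k m) = (\<Sum>m\<in>S. \<psi> k m)" .
  moreover have "(\<Sum>j\<in>S. \<psi> (Suc k) j) = (\<Sum>j\<in>S. (\<Sum>m\<in>S. c j m * \<psi> k m) + g (Suc k) j - g k j)"
    using upd by simp
  ultimately show ?case
    using Suc.IH by (simp add: sum.distrib sum_subtractf)
qed

lemma left_fixed_vector_weighted_sum:
  fixes u :: "'a \<Rightarrow> real"
  assumes "\<forall>m\<in>S. (\<Sum>j\<in>S. u j * r j m) = u m"
  shows "(\<Sum>j\<in>S. u j * (\<Sum>m\<in>S. r j m * x m)) = (\<Sum>m\<in>S. u m * x m)"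
proof -
  have "(\<Sum>j\<in>S. u j * (\<Sum>m\<in>S. r j m * x m)) = (\<Sum>m\<in>S. (\<Sum>j\<in>S. u j * r j m) * x m)"
    by (simp add: sum_distrib_left sum_distrib_right mult_ac) (rule sum.swap)
  then show ?thesis
    using assms by simp
qed

section \<open>Elementary estimates\<close>

lemma power2_norm_vec: "(norm (x::real^'n))\<^sup>2 = (\<Sum>i\<in>UNIV. (x$i)\<^sup>2)"
  unfolding power2_norm_eq_inner inner_vec_def by (simp add: power2_eq_square)

lemma power2_sum_le_of_abs_le_mult:
  fixes d a b :: "'a \<Rightarrow> real"
  assumes "\<forall>j\<in>S. \<bar>d j\<bar> \<le> a j * b j"
  shows "(\<Sum>j\<in>S. d j)\<^sup>2 \<le> (\<Sum>j\<in>S. (a j)\<^sup>2) * (\<Sum>j\<in>S. (b j)\<^sup>2)"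
proof -
  have "\<bar>\<Sum>j\<in>S. d j\<bar> \<le> (\<Sum>j\<in>S. \<bar>d j\<bar>)"
    by (rule sum_abs)
  also have "\<dots> \<le> (\<Sum>j\<in>S. a j * b j)"
    using assms by (intro sum_mono) blast
  finally have "\<bar>\<Sum>j\<in>S. d j\<bar>\<^sup>2 \<le> (\<Sum>j\<in>S. a j * b j)\<^sup>2"
    by (rule power_mono) simp
  also have "\<dots> \<le> (\<Sum>j\<in>S. (a j)\<^sup>2) * (\<Sum>j\<in>S. (b j)\<^sup>2)"
    by (rule Cauchy_Schwarz_ineq_sum)
  finally show ?thesis
    by simp
qed

lemma abs_sum_components_diff_le_lipschitz:
  fixes g :: "real^'n \<Rightarrow> real^'n"
  assumes "lipschitz_on L UNIV g"
  shows "\<bar>\<Sum>m\<in>S. g a $ m - g b $ m\<bar> \<le> L * (sqrt (card S) * norm (a - b))"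
proof -
  have "L \<ge> 0" and lip: "norm (g a - g b) \<le> L * norm (a - b)"
    using assms by (auto simp: lipschitz_on_def dist_norm)
  have "(\<Sum>m\<in>S. g a $ m - g b $ m)\<^sup>2 \<le> (\<Sum>m\<in>S. (g a $ m - g b $ m)\<^sup>2) * card S"
    by (rule sum_squared_le_sum_of_squares)
  also have "\<dots> \<le> (\<Sum>m\<in>UNIV. (g a $ m - g b $ m)\<^sup>2) * card S"
    by (rule mult_right_mono) (auto intro: sum_mono2)
  also have "\<dots> = (norm (g a - g b))\<^sup>2 * card S"
    by (simp add: power2_norm_vec)
  also have "\<dots> \<le> (L * norm (a - b))\<^sup>2 * card S"
    by (rule mult_right_mono) (use lip in \<open>auto intro: power_mono\<close>)
  also have "\<dots> = (L * (sqrt (card S) * norm (a - b)))\<^sup>2"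
    by (simp add: power_mult_distrib mult_ac)
  finally show ?thesis
    using \<open>L \<ge> 0\<close> power2_le_imp_le[of "\<bar>\<Sum>m\<in>S. g a $ m - g b $ m\<bar>"] by simp
qed

lemma power2_norm_bcast_diff_le:
  fixes coal :: "'v::finite \<Rightarrow> 'c::finite"
  shows "(norm (bcast coal a - bcast coal b))\<^sup>2 \<le> Max (range (\<lambda>i. real (nc coal i))) * (norm (a - b))\<^sup>2"
proof -
  have "(norm (bcast coal a - bcast coal b))\<^sup>2 = (\<Sum>v\<in>UNIV. (a $ coal v - b $ coal v)\<^sup>2)"
    by (simp add: power2_norm_vec bcast_def)
  also have "\<dots> = (\<Sum>c\<in>UNIV. \<Sum>v\<in>{v\<in>UNIV. coal v = c}. (a $ coal v - b $ coal v)\<^sup>2)"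
    by (rule sum.group[symmetric]) auto
  also have "\<dots> = (\<Sum>c\<in>UNIV. real (nc coal c) * (a $ c - b $ c)\<^sup>2)"
    by (rule sum.cong[OF refl]) (simp add: nc_def agents_def)
  also have "\<dots> \<le> (\<Sum>c\<in>UNIV. Max (range (\<lambda>i. real (nc coal i))) * (a $ c - b $ c)\<^sup>2)"
    by (rule sum_mono, rule mult_right_mono) auto
  finally show ?thesis
    by (simp add: power2_norm_vec sum_distrib_left)
qed
lemma power2_add3_le_weighted:
  fixes x y z p q r :: real
  assumes "p > 0" "q > 0" "r > 0"
  shows "(x + y + z)\<^sup>2 \<le> (p + q + r) * (x\<^sup>2 / p + y\<^sup>2 / q + z\<^sup>2 / r)"
proof -
  have amgm: "2 * a * b \<le> t * a\<^sup>2 / s + s * b\<^sup>2 / t" if "s > 0" "t > 0" for a b s t :: real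
proof -
    have "0 \<le> (t * a - s * b)\<^sup>2 / (s * t)"
      using that by simp
    also have "\<dots> = t * a\<^sup>2 / s + s * b\<^sup>2 / t - 2 * a * b"
      using that by (simp add: field_simps power2_eq_square)
    finally show ?thesis
      by simp
  qed
  have "(p + q + r) * (x\<^sup>2 / p + y\<^sup>2 / q + z\<^sup>2 / r) = x\<^sup>2 + y\<^sup>2 + z\<^sup>2
      + (q * x\<^sup>2 / p + p * y\<^sup>2 / q) + (r * x\<^sup>2 / p + p * z\<^sup>2 / r) + (r * y\<^sup>2 / q + q * z\<^sup>2 / r)"
    using assms by (simp add: field_simps)
  moreover have "(x + y + z)\<^sup>2 = x\<^sup>2 + y\<^sup>2 + z\<^sup>2 + 2 * x * y + 2 * x * z + 2 * y * z"
    by (simp add: power2_eq_square algebra_simps)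
  ultimately show ?thesis
    using amgm[of p q x y] amgm[of p r x z] amgm[of q r y z] assms by linarith
qed

lemma descent_step_ineq:
  fixes n uw \<alpha> l e P G Q :: real
  assumes "n > 0" "uw > 0" "\<alpha> > 0" "l > 0"
  shows "n^3 / (\<alpha> * uw) * (e - \<alpha> / n\<^sup>2 * (P + uw * G / n))\<^sup>2 - n^3 / (\<alpha> * uw) * e\<^sup>2
     \<le> - 2 * e * Q + l * e\<^sup>2 + 2 / l * (G - Q)\<^sup>2 + 2 / l * ((n / uw)\<^sup>2 * P\<^sup>2)
        + \<alpha> / (n^3 * uw) * (uw * G + n * P)\<^sup>2"
proof -
  have young: "- 2 * e * D \<le> l / 2 * e\<^sup>2 + 2 / l * D\<^sup>2" for D
proof -
    have "0 \<le> l / 2 * (e + 2 / l * D)\<^sup>2"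
      using assms by simp
    also have "\<dots> = l / 2 * e\<^sup>2 + 2 / l * D\<^sup>2 + 2 * e * D"
      using assms by (simp add: field_simps power2_eq_square)
    finally show ?thesis
      by simp
  qed
  have "n^3 / (\<alpha> * uw) * (e - \<alpha> / n\<^sup>2 * (P + uw * G / n))\<^sup>2 - n^3 / (\<alpha> * uw) * e\<^sup>2
     = - 2 * e * (G - Q) - 2 * e * (n / uw * P) - 2 * e * Q + \<alpha> / (n^3 * uw) * (uw * G + n * P)\<^sup>2"
    using assms by (simp add: field_simps power2_eq_square power3_eq_cube)
  moreover have "(n / uw)\<^sup>2 * P\<^sup>2 = (n / uw * P)\<^sup>2"
    by (simp only: power_mult_distrib)
  ultimately show ?thesis
    using young[of "G - Q"] young[of "n / uw * P"] by simp
qed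

lemma power2_sum_mixed_error_le:
  fixes w d :: "'a \<Rightarrow> real" and n M L A B C Q D :: real
  assumes "(\<Sum>j\<in>S. (w j)\<^sup>2) > 0" and "n > 0" and "M > 0" and "L \<ge> 0"
    and Q: "Q\<^sup>2 \<le> n\<^sup>2 * L * M * C" and D: "D\<^sup>2 \<le> n * L * B" and d: "(\<Sum>j\<in>S. (d j)\<^sup>2) \<le> n * A"
    and "A \<ge> 0" "B \<ge> 0" "C \<ge> 0"
  shows "(\<Sum>j\<in>S. (w j * (Q + D) + n * d j)\<^sup>2) \<le> n\<^sup>2 * (n + (1 / n + M) * (\<Sum>j\<in>S. (w j)\<^sup>2) * L) * (A + B + C)"
proof (cases "L = 0")
  case True
  then have "Q = 0" "D = 0"
    using Q D by simp_all
  then have "(\<Sum>j\<in>S. (w j * (Q + D) + n * d j)\<^sup>2) = n\<^sup>2 * (\<Sum>j\<in>S. (d j)\<^sup>2)"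
    by (simp add: power_mult_distrib sum_distrib_left)
  also have "\<dots> \<le> n\<^sup>2 * (n * (A + B + C))"
  proof (intro mult_left_mono)
    have "n * A \<le> n * (A + B + C)"
      using assms by (intro mult_left_mono) auto
    then show "(\<Sum>j\<in>S. (d j)\<^sup>2) \<le> n * (A + B + C)"
      using d by linarith
  qed simp
  finally show ?thesis
    using True by (simp add: mult_ac)
next
  case False
  \<comment> \<open>Weights that turn the three hypotheses into the common factor n^2 (n + (1/n + M) W L).\<close>
  define W where "W = (\<Sum>j\<in>S. (w j)\<^sup>2)"
  define p where "p = n\<^sup>2 * W * L * M"
  define q where "q = n * W * L"
  define r where "r = n^3"
  have pos: "p > 0" "q > 0" "r > 0"
    using False assms by (simp_all add: p_def q_def r_def W_def)
  have "(\<Sum>j\<in>S. (w j * (Q + D) + n * d j)\<^sup>2)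
      \<le> (\<Sum>j\<in>S. (p + q + r) * ((w j * Q)\<^sup>2 / p + (w j * D)\<^sup>2 / q + (n * d j)\<^sup>2 / r))"
    using power2_add3_le_weighted[OF pos] by (intro sum_mono) (simp add: distrib_left)
  also have "\<dots> = (p + q + r) * (W * Q\<^sup>2 / p + W * D\<^sup>2 / q + n\<^sup>2 * (\<Sum>j\<in>S. (d j)\<^sup>2) / r)"
    by (simp add: W_def sum.distrib power_mult_distrib
        flip: sum_distrib_left sum_divide_distrib sum_distrib_right)
  also have "\<dots> \<le> (p + q + r) * (C + B + A)"
  proof (intro mult_left_mono add_mono)
    have "W * Q\<^sup>2 \<le> C * p"
      using mult_left_mono[OF Q, of W] assms(1) by (simp add: W_def p_def mult_ac)
    then show "W * Q\<^sup>2 / p \<le> C"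
      using pos(1) by (simp add: pos_divide_le_eq)
    have "W * D\<^sup>2 \<le> B * q"
      using mult_left_mono[OF D, of W] assms(1) by (simp add: W_def q_def mult_ac)
    then show "W * D\<^sup>2 / q \<le> B"
      using pos(2) by (simp add: pos_divide_le_eq)
    have "n\<^sup>2 * (\<Sum>j\<in>S. (d j)\<^sup>2) \<le> A * r"
      using mult_left_mono[OF d, of "n\<^sup>2"] by (simp add: r_def power3_eq_cube power2_eq_square mult_ac)
    then show "n\<^sup>2 * (\<Sum>j\<in>S. (d j)\<^sup>2) / r \<le> A"
      using pos(3) by (simp add: pos_divide_le_eq)
  qed (use pos in simp)
  also have "p + q + r = n\<^sup>2 * (n + (1 / n + M) * W * L)"
    using assms by (simp add: p_def q_def r_def field_simps power2_eq_square power3_eq_cube)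
  finally show ?thesis
    by (simp add: W_def add_ac)
qed

lemma Max_range_ge: "(g :: 'a::finite \<Rightarrow> 'b::linorder) i \<le> Max (range g)"
  by (rule Max_ge) auto

section \<open>The one-step estimate\<close>

locale coalition_nash_seeking =
  fixes coal :: "'v::finite \<Rightarrow> 'c::finite"
    and E :: "('v \<times> 'v) set"
    and f :: "'v \<Rightarrow> real^'v \<Rightarrow> real"
    and lc :: "'v \<Rightarrow> real"
    and l \<alpha> :: real
    and r cw :: "'v \<Rightarrow> 'v \<Rightarrow> real"
    and x :: "nat \<Rightarrow> real^'v"
    and \<xi> :: "nat \<Rightarrow> 'v \<Rightarrow> real^'v"
    and \<psi> :: "nat \<Rightarrow> 'v \<Rightarrow> 'v \<Rightarrow> real"
    and u w :: "'v \<Rightarrow> real"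
    and ys :: "real^'c"
  assumes coal_nonempty: "\<forall>i. agents coal i \<noteq> {}"
    and A1_Gi: "\<forall>i. strongly_connected_on (agents coal i) E"
    and differentiable: "\<forall>v p. f v differentiable at p"
    and A2_lip: "\<forall>v. lipschitz_on (lc v) UNIV (grad (f v))"
    and l_pos: "l > 0"
    and A3: "\<forall>a b. (a - b) \<bullet> (Qmap coal f a - Qmap coal f b) \<ge> l * (norm (a - b))\<^sup>2"
    and NE: "nash_eq coal f ys"
    and r_pos: "\<forall>ij im. coal im = coal ij \<longrightarrow> im \<in> coal_in_nbrs E coal ij \<union> {ij} \<longrightarrow> r ij im > 0"
    and r_zero: "\<forall>ij im. coal im = coal ij \<longrightarrow> im \<notin> coal_in_nbrs E coal ij \<union> {ij} \<longrightarrow> r ij im = 0"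
    and r_sum: "\<forall>ij. (\<Sum>im\<in>agents coal (coal ij). r ij im) = 1"
    and c_pos: "\<forall>ij im. coal im = coal ij \<longrightarrow> im \<in> coal_out_nbrs E coal ij \<union> {ij} \<longrightarrow> cw im ij > 0"
    and c_zero: "\<forall>ij im. coal im = coal ij \<longrightarrow> im \<notin> coal_out_nbrs E coal ij \<union> {ij} \<longrightarrow> cw im ij = 0"
    and c_sum: "\<forall>ij. (\<Sum>im\<in>agents coal (coal ij). cw im ij) = 1"
    and alpha_pos: "\<alpha> > 0"
    and init_psi: "\<forall>ij il. coal il = coal ij \<longrightarrow> \<psi> 0 ij il = pd (f ij) il (\<xi> 0 ij)"
    and upd_x: "\<forall>k ij. x (Suc k) $ ij =
        (\<Sum>im\<in>agents coal (coal ij). r ij im * x k $ im)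
        - \<alpha> / real (nc coal (coal ij)) * (\<Sum>im\<in>agents coal (coal ij). \<psi> k ij im)"
    and upd_psi: "\<forall>k ij il. coal il = coal ij \<longrightarrow> \<psi> (Suc k) ij il =
        (\<Sum>im\<in>agents coal (coal ij). cw ij im * \<psi> k im il)
        + pd (f ij) il (\<xi> (Suc k) ij) - pd (f ij) il (\<xi> k ij)"
    and u_left: "\<forall>im. (\<Sum>ij\<in>agents coal (coal im). u ij * r ij im) = u im"
    and u_norm: "\<forall>i. (\<Sum>ij\<in>agents coal i. u ij) = real (nc coal i)"
    and w_right: "\<forall>ij. (\<Sum>im\<in>agents coal (coal ij). cw ij im * w im) = w ij"
    and w_norm: "\<forall>i. (\<Sum>ij\<in>agents coal i. w ij) = real (nc coal i)"
begin

text \<open>The abbreviations of the main statement, in the same \<open>\<lambda>\<close>-form so that they unfold to it.\<close>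

definition n :: "'c \<Rightarrow> real" where
  "n = (\<lambda>i. real (nc coal i))"

definition unorm2 :: "'c \<Rightarrow> real" where
  "unorm2 = (\<lambda>i. \<Sum>j\<in>agents coal i. (u j)\<^sup>2)"

definition wnorm2 :: "'c \<Rightarrow> real" where
  "wnorm2 = (\<lambda>i. \<Sum>j\<in>agents coal i. (w j)\<^sup>2)"

definition uw :: "'c \<Rightarrow> real" where
  "uw = (\<lambda>i. \<Sum>j\<in>agents coal i. u j * w j)"

definition L2 :: "'c \<Rightarrow> real" where
  "L2 = (\<lambda>i. \<Sum>j\<in>agents coal i. (lc j)\<^sup>2)"

definition beta_xpsi :: real where
  "beta_xpsi = 2 / l * Max (range (\<lambda>i. n i ^ 3 * unorm2 i / (uw i)\<^sup>2))"

definition beta_xxi :: real where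
  "beta_xxi = 2 / l * Max (range (\<lambda>i. n i * L2 i))"

definition b0 :: "'c \<Rightarrow> real" where
  "b0 = (\<lambda>i. n i + (1 / n i + Max (range n)) * wnorm2 i * L2 i)"

definition b1 :: "'c \<Rightarrow> real" where
  "b1 = (\<lambda>i. unorm2 i / (n i * uw i) * b0 i)"

definition xbar :: "nat \<Rightarrow> 'c \<Rightarrow> real" where
  "xbar = (\<lambda>k i. (\<Sum>j\<in>agents coal i. u j * x k $ j) / n i)"

definition xbar_vec :: "nat \<Rightarrow> real^'c" where
  "xbar_vec k = (\<chi> i. xbar k i)"

definition Xbar :: "nat \<Rightarrow> real^'v" where
  "Xbar = (\<lambda>k. \<chi> v. xbar k (coal v))"

definition psibar :: "nat \<Rightarrow> 'c \<Rightarrow> 'v \<Rightarrow> real" where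
  "psibar = (\<lambda>k i il. (\<Sum>j\<in>agents coal i. \<psi> k j il) / n i)"

definition Epsi_coal :: "nat \<Rightarrow> 'c \<Rightarrow> real" where
  "Epsi_coal k i = (\<Sum>j\<in>agents coal i. \<Sum>il\<in>agents coal i. (\<psi> k j il - w j * psibar k i il)\<^sup>2)"

definition Epsi :: "nat \<Rightarrow> real" where
  "Epsi = (\<lambda>k. \<Sum>i\<in>UNIV. \<Sum>j\<in>agents coal i. \<Sum>il\<in>agents coal i. (\<psi> k j il - w j * psibar k i il)\<^sup>2)"

definition Exbar :: "nat \<Rightarrow> real" where
  "Exbar = (\<lambda>k. \<Sum>i\<in>UNIV. (xbar k i - ys $ i)\<^sup>2)"

definition Exi_coal :: "nat \<Rightarrow> 'c \<Rightarrow> real" where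
  "Exi_coal k i = (\<Sum>j\<in>agents coal i. (norm (\<xi> k j - Xbar k))\<^sup>2)"

definition Exi :: "nat \<Rightarrow> real" where
  "Exi = (\<lambda>k. \<Sum>j\<in>UNIV. (norm (\<xi> k j - Xbar k))\<^sup>2)"

definition Vx :: "nat \<Rightarrow> real" where
  "Vx = (\<lambda>k. \<Sum>i\<in>UNIV. n i ^ 3 / (\<alpha> * uw i) * (xbar k i - ys $ i)\<^sup>2)"

definition grad_sum :: "nat \<Rightarrow> 'c \<Rightarrow> real" where
  "grad_sum k i = (\<Sum>j\<in>agents coal i. \<Sum>m\<in>agents coal i. pd (f j) m (\<xi> k j))"

definition Q_xbar :: "nat \<Rightarrow> 'c \<Rightarrow> real" where
  "Q_xbar k i = (\<Sum>j\<in>agents coal i. \<Sum>m\<in>agents coal i. pd (f j) m (Xbar k))"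

definition psi_dev :: "nat \<Rightarrow> 'c \<Rightarrow> 'v \<Rightarrow> real" where
  "psi_dev k i j = (\<Sum>m\<in>agents coal i. \<psi> k j m - w j * psibar k i m)"

definition u_psi_dev :: "nat \<Rightarrow> 'c \<Rightarrow> real" where
  "u_psi_dev k i = (\<Sum>j\<in>agents coal i. u j * psi_dev k i j)"

lemma n_eq_card: "n i = card (agents coal i)"
  by (simp add: n_def nc_def)

lemma n_pos: "n i > 0"
  using coal_nonempty by (simp add: n_eq_card card_gt_0_iff)

lemma u_pos: "j \<in> agents coal i \<Longrightarrow> u j > 0"
  using coalition_fixed_vector_pos[OF A1_Gi[rule_format] r_pos r_zero r_sum u_left] u_norm n_pos
  by (simp add: n_def)

text \<open>The transpose of a column-stochastic C_i is row stochastic on the reversed graph.\<close>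

lemma w_pos: "j \<in> agents coal i \<Longrightarrow> w j > 0"
proof (rule coalition_fixed_vector_pos[where a = "\<lambda>j m. cw m j"])
  show "strongly_connected_on (agents coal i) (E\<inverse>)"
    using A1_Gi strongly_connected_on_converse by blast
  show "\<forall>im. (\<Sum>ij\<in>agents coal (coal im). w ij * cw im ij) = w im"
    using w_right by (simp add: mult.commute)
  show "0 < sum w (agents coal i)"
    using w_norm n_pos by (simp add: n_def)
qed (use c_pos c_zero c_sum in \<open>simp_all add: coal_out_nbrs_eq_coal_in_nbrs_converse\<close>)

lemma uw_pos: "uw i > 0"
  unfolding uw_def using coal_nonempty u_pos w_pos by (intro sum_pos) auto

lemma wnorm2_pos: "wnorm2 i > 0"
  unfolding wnorm2_def using coal_nonempty w_pos by (intro sum_pos) (auto, metis less_irrefl)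

lemma sum_psi_tracks_grad:
  assumes "m \<in> agents coal i"
  shows "(\<Sum>j\<in>agents coal i. \<psi> k j m) = (\<Sum>j\<in>agents coal i. pd (f j) m (\<xi> k j))"
proof (rule column_stochastic_tracking[where c = cw])
  show "\<forall>im\<in>agents coal i. (\<Sum>j\<in>agents coal i. cw j im) = 1"
    using c_sum agents_coal_eq[of _ coal i] by metis
  show "\<forall>j\<in>agents coal i. \<psi> 0 j m = pd (f j) m (\<xi> 0 j)"
    using init_psi assms by (simp add: agents_def)
  show "\<forall>k. \<forall>j\<in>agents coal i. \<psi> (Suc k) j m
      = (\<Sum>im\<in>agents coal i. cw j im * \<psi> k im m) + pd (f j) m (\<xi> (Suc k) j) - pd (f j) m (\<xi> k j)"
    using upd_psi assms by (simp add: agents_def)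
qed

lemma grad_sum_eq: "grad_sum k i = n i * (\<Sum>m\<in>agents coal i. psibar k i m)"
proof -
  have "grad_sum k i = (\<Sum>m\<in>agents coal i. \<Sum>j\<in>agents coal i. \<psi> k j m)"
    unfolding grad_sum_def by (subst sum.swap) (simp add: sum_psi_tracks_grad)
  then show ?thesis
    using n_pos[of i] by (simp add: psibar_def flip: sum_divide_distrib)
qed

lemma u_weighted_psi_sum:
  "(\<Sum>j\<in>agents coal i. u j * (\<Sum>m\<in>agents coal i. \<psi> k j m)) = u_psi_dev k i + uw i * grad_sum k i / n i"
proof -
  have "(\<Sum>j\<in>agents coal i. u j * (\<Sum>m\<in>agents coal i. \<psi> k j m))
      = (\<Sum>j\<in>agents coal i. u j * psi_dev k i j + u j * w j * (\<Sum>m\<in>agents coal i. psibar k i m))"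
    by (intro sum.cong refl) (simp add: psi_dev_def sum_subtractf sum_distrib_left algebra_simps)
  also have "\<dots> = u_psi_dev k i + uw i * (\<Sum>m\<in>agents coal i. psibar k i m)"
    by (simp add: u_psi_dev_def uw_def sum.distrib sum_distrib_right)
  finally show ?thesis
    using n_pos[of i] by (simp add: grad_sum_eq)
qed

lemma xbar_Suc:
  "xbar (Suc k) i = xbar k i - \<alpha> / (n i)\<^sup>2 * (u_psi_dev k i + uw i * grad_sum k i / n i)"
proof -
  have "u j * x (Suc k) $ j = u j * (\<Sum>m\<in>agents coal i. r j m * x k $ m)
      - \<alpha> / n i * (u j * (\<Sum>m\<in>agents coal i. \<psi> k j m))" if "j \<in> agents coal i" for j
proof -
    have "coal j = i"
      using that by (simp add: agents_def)
    then show ?thesis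
      using upd_x[rule_format, of k j] by (simp add: n_def right_diff_distrib)
  qed
  then have "(\<Sum>j\<in>agents coal i. u j * x (Suc k) $ j)
      = (\<Sum>j\<in>agents coal i. u j * (\<Sum>m\<in>agents coal i. r j m * x k $ m))
        - \<alpha> / n i * (\<Sum>j\<in>agents coal i. u j * (\<Sum>m\<in>agents coal i. \<psi> k j m))"
    by (simp add: sum_subtractf sum_distrib_left)
  also have "(\<Sum>j\<in>agents coal i. u j * (\<Sum>m\<in>agents coal i. r j m * x k $ m)) = (\<Sum>m\<in>agents coal i. u m * x k $ m)"
    using u_left agents_coal_eq[of _ coal i] by (intro left_fixed_vector_weighted_sum) metis
  finally show ?thesis
    using n_pos[of i] by (simp add: xbar_def u_weighted_psi_sum field_simps power2_eq_square)
qed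

lemma Xbar_eq_bcast: "Xbar k = bcast coal (xbar_vec k)"
  by (simp add: Xbar_def bcast_def xbar_vec_def)

lemma power2_norm_xbar_vec_diff: "(norm (xbar_vec k - ys))\<^sup>2 = Exbar k"
  by (simp add: power2_norm_vec Exbar_def xbar_vec_def)

lemma Q_xbar_eq_Qmap: "Q_xbar k i = Qmap coal f (xbar_vec k) $ i"
  by (simp add: Q_xbar_def Qmap_eq_sum_pd[OF differentiable] Xbar_eq_bcast)

lemma L2_nonneg: "L2 i \<ge> 0"
  by (simp add: L2_def sum_nonneg)

lemma sum_pd_diff_bound:
  "(\<Sum>j\<in>agents coal i. \<Sum>m\<in>agents coal i. pd (f j) m (a j) - pd (f j) m (b j))\<^sup>2
     \<le> n i * L2 i * (\<Sum>j\<in>agents coal i. (norm (a j - b j))\<^sup>2)"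
proof -
  have "\<bar>\<Sum>m\<in>agents coal i. pd (f j) m (a j) - pd (f j) m (b j)\<bar>
      \<le> lc j * (sqrt (card (agents coal i)) * norm (a j - b j))" for j
    using abs_sum_components_diff_le_lipschitz[of "lc j" "grad (f j)"] A2_lip by (simp add: grad_def)
  then have "(\<Sum>j\<in>agents coal i. \<Sum>m\<in>agents coal i. pd (f j) m (a j) - pd (f j) m (b j))\<^sup>2
      \<le> L2 i * (\<Sum>j\<in>agents coal i. (sqrt (card (agents coal i)) * norm (a j - b j))\<^sup>2)"
    unfolding L2_def by (intro power2_sum_le_of_abs_le_mult) blast
  also have "\<dots> = n i * L2 i * (\<Sum>j\<in>agents coal i. (norm (a j - b j))\<^sup>2)"
    by (simp add: n_eq_card power_mult_distrib sum_distrib_left mult_ac)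
  finally show ?thesis .
qed

lemma grad_sum_minus_Q_xbar_bound: "(grad_sum k i - Q_xbar k i)\<^sup>2 \<le> n i * L2 i * Exi_coal k i"
  using sum_pd_diff_bound[where i = i and a = "\<xi> k" and b = "\<lambda>_. Xbar k"]
  by (simp add: grad_sum_def Q_xbar_def Exi_coal_def sum_subtractf)

lemma Q_xbar_bound: "(Q_xbar k i)\<^sup>2 \<le> (n i)\<^sup>2 * L2 i * Max (range n) * Exbar k"
proof -
  let ?a = "bcast coal (xbar_vec k)" and ?b = "bcast coal ys"
  have "Q_xbar k i = Qmap coal f (xbar_vec k) $ i - Qmap coal f ys $ i"
    by (simp add: Q_xbar_eq_Qmap Qmap_nash_eq_zero[OF differentiable NE])
  also have "\<dots> = (\<Sum>j\<in>agents coal i. \<Sum>m\<in>agents coal i. pd (f j) m ?a - pd (f j) m ?b)"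
    by (simp add: Qmap_eq_sum_pd[OF differentiable] sum_subtractf)
  finally have "(Q_xbar k i)\<^sup>2 \<le> n i * L2 i * (\<Sum>j\<in>agents coal i. (norm (?a - ?b))\<^sup>2)"
    using sum_pd_diff_bound[where i = i and a = "\<lambda>_. ?a" and b = "\<lambda>_. ?b"] by simp
  also have "\<dots> = (n i)\<^sup>2 * L2 i * (norm (?a - ?b))\<^sup>2"
    by (simp add: n_eq_card power2_eq_square)
  also have "\<dots> \<le> (n i)\<^sup>2 * L2 i * (Max (range n) * Exbar k)"
    using power2_norm_bcast_diff_le[of coal "xbar_vec k" ys] L2_nonneg[of i]
    by (intro mult_left_mono) (simp_all add: n_def power2_norm_xbar_vec_diff)
  finally show ?thesis
    by (simp add: mult_ac)
qed

lemma psi_dev_bound: "(\<Sum>j\<in>agents coal i. (psi_dev k i j)\<^sup>2) \<le> n i * Epsi_coal k i"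
proof -
  have "(\<Sum>j\<in>agents coal i. (psi_dev k i j)\<^sup>2)
      \<le> (\<Sum>j\<in>agents coal i. (\<Sum>m\<in>agents coal i. (\<psi> k j m - w j * psibar k i m)\<^sup>2) * card (agents coal i))"
    unfolding psi_dev_def by (intro sum_mono sum_squared_le_sum_of_squares)
  also have "\<dots> = n i * Epsi_coal k i"
    by (simp add: Epsi_coal_def n_eq_card sum_distrib_left sum_distrib_right mult_ac)
  finally show ?thesis .
qed

lemma u_psi_dev_bound: "(u_psi_dev k i)\<^sup>2 \<le> unorm2 i * (n i * Epsi_coal k i)"
proof -
  have "(u_psi_dev k i)\<^sup>2 \<le> unorm2 i * (\<Sum>j\<in>agents coal i. (psi_dev k i j)\<^sup>2)"
    unfolding u_psi_dev_def unorm2_def by (rule Cauchy_Schwarz_ineq_sum)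
  also have "\<dots> \<le> unorm2 i * (n i * Epsi_coal k i)"
    using psi_dev_bound by (intro mult_left_mono) (simp_all add: unorm2_def sum_nonneg)
  finally show ?thesis .
qed

lemma increment_bound:
  "(uw i * grad_sum k i + n i * u_psi_dev k i)\<^sup>2
     \<le> unorm2 i * ((n i)\<^sup>2 * b0 i * (Epsi_coal k i + Exi_coal k i + Exbar k))"
proof -
  let ?Q = "Q_xbar k i" and ?D = "grad_sum k i - Q_xbar k i"
  have "uw i * grad_sum k i + n i * u_psi_dev k i
      = (\<Sum>j\<in>agents coal i. u j * (w j * (?Q + ?D) + n i * psi_dev k i j))"
    by (simp add: uw_def u_psi_dev_def algebra_simps sum.distrib sum_distrib_left sum_distrib_right)
  then have "(uw i * grad_sum k i + n i * u_psi_dev k i)\<^sup>2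
      \<le> unorm2 i * (\<Sum>j\<in>agents coal i. (w j * (?Q + ?D) + n i * psi_dev k i j)\<^sup>2)"
    unfolding unorm2_def by (simp only: Cauchy_Schwarz_ineq_sum)
  also have "\<dots> \<le> unorm2 i * ((n i)\<^sup>2 * b0 i * (Epsi_coal k i + Exi_coal k i + Exbar k))"
  proof (intro mult_left_mono)
    have "Max (range n) > 0"
      using n_pos Max_range_ge[of n] by (meson less_le_trans)
    then show "(\<Sum>j\<in>agents coal i. (w j * (?Q + ?D) + n i * psi_dev k i j)\<^sup>2)
        \<le> (n i)\<^sup>2 * b0 i * (Epsi_coal k i + Exi_coal k i + Exbar k)"
      using power2_sum_mixed_error_le[where w = w, OF _ n_pos _ L2_nonneg Q_xbar_bound[of k i]
          grad_sum_minus_Q_xbar_bound[of k i] psi_dev_bound[where k = k and i = i]] wnorm2_pos[of i]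
      by (simp add: b0_def wnorm2_def Epsi_coal_def Exi_coal_def Exbar_def sum_nonneg)
  qed (simp add: unorm2_def sum_nonneg)
  finally show ?thesis .
qed

lemma Epsi_coal_nonneg: "Epsi_coal k i \<ge> 0"
  by (simp add: Epsi_coal_def sum_nonneg)

lemma Exi_coal_nonneg: "Exi_coal k i \<ge> 0"
  by (simp add: Exi_coal_def sum_nonneg)

lemma Exbar_nonneg: "Exbar k \<ge> 0"
  by (simp add: Exbar_def sum_nonneg)

lemma estimation_error_term_le: "2 / l * (grad_sum k i - Q_xbar k i)\<^sup>2 \<le> beta_xxi * Exi_coal k i"
proof -
  have "(grad_sum k i - Q_xbar k i)\<^sup>2 \<le> Max (range (\<lambda>i. n i * L2 i)) * Exi_coal k i"
    using grad_sum_minus_Q_xbar_bound Max_range_ge[of "\<lambda>i. n i * L2 i" i] Exi_coal_nonneg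
    by (meson mult_right_mono order_trans)
  then show ?thesis
    using l_pos by (simp add: beta_xxi_def divide_le_cancel mult.assoc mult_left_mono)
qed

lemma tracking_error_term_le: "2 / l * ((n i / uw i)\<^sup>2 * (u_psi_dev k i)\<^sup>2) \<le> beta_xpsi * Epsi_coal k i"
proof -
  have "(n i / uw i)\<^sup>2 * (u_psi_dev k i)\<^sup>2 \<le> (n i / uw i)\<^sup>2 * (unorm2 i * (n i * Epsi_coal k i))"
    using u_psi_dev_bound by (intro mult_left_mono) simp_all
  also have "\<dots> = n i ^ 3 * unorm2 i / (uw i)\<^sup>2 * Epsi_coal k i"
    by (simp add: power2_eq_square power3_eq_cube field_simps)
  also have "\<dots> \<le> Max (range (\<lambda>i. n i ^ 3 * unorm2 i / (uw i)\<^sup>2)) * Epsi_coal k i"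
    using Max_range_ge Epsi_coal_nonneg by (intro mult_right_mono)
  finally show ?thesis
    using l_pos by (simp add: beta_xpsi_def divide_le_cancel mult.assoc mult_left_mono)
qed

lemma increment_term_le:
  "\<alpha> / (n i ^ 3 * uw i) * (uw i * grad_sum k i + n i * u_psi_dev k i)\<^sup>2
     \<le> \<alpha> * Max (range b1) * (Epsi_coal k i + Exi_coal k i + Exbar k)"
proof -
  have "\<alpha> / (n i ^ 3 * uw i) * (uw i * grad_sum k i + n i * u_psi_dev k i)\<^sup>2
      \<le> \<alpha> / (n i ^ 3 * uw i) * (unorm2 i * ((n i)\<^sup>2 * b0 i * (Epsi_coal k i + Exi_coal k i + Exbar k)))"
    using increment_bound alpha_pos n_pos[of i] uw_pos[of i] by (intro mult_left_mono) simp_all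
  also have "\<dots> = \<alpha> * b1 i * (Epsi_coal k i + Exi_coal k i + Exbar k)"
    using n_pos[of i] uw_pos[of i] by (simp add: b1_def power2_eq_square power3_eq_cube field_simps)
  also have "\<dots> \<le> \<alpha> * Max (range b1) * (Epsi_coal k i + Exi_coal k i + Exbar k)"
    using Max_range_ge[of b1 i] Epsi_coal_nonneg Exi_coal_nonneg Exbar_nonneg alpha_pos
    by (intro mult_right_mono mult_left_mono) simp_all
  finally show ?thesis .
qed

lemma Vx_coalition_step:
  "n i ^ 3 / (\<alpha> * uw i) * (xbar (Suc k) i - ys $ i)\<^sup>2 - n i ^ 3 / (\<alpha> * uw i) * (xbar k i - ys $ i)\<^sup>2
     \<le> - 2 * (xbar k i - ys $ i) * Q_xbar k i + l * (xbar k i - ys $ i)\<^sup>2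
       + beta_xxi * Exi_coal k i + beta_xpsi * Epsi_coal k i
       + \<alpha> * Max (range b1) * (Epsi_coal k i + Exi_coal k i + Exbar k)"
proof -
  let ?G = "grad_sum k i" and ?Q = "Q_xbar k i" and ?P = "u_psi_dev k i"
  have "xbar (Suc k) i - ys $ i = (xbar k i - ys $ i) - \<alpha> / (n i)\<^sup>2 * (?P + uw i * ?G / n i)"
    by (simp add: xbar_Suc)
  then have "n i ^ 3 / (\<alpha> * uw i) * (xbar (Suc k) i - ys $ i)\<^sup>2 - n i ^ 3 / (\<alpha> * uw i) * (xbar k i - ys $ i)\<^sup>2
     \<le> - 2 * (xbar k i - ys $ i) * ?Q + l * (xbar k i - ys $ i)\<^sup>2 + 2 / l * (?G - ?Q)\<^sup>2
       + 2 / l * ((n i / uw i)\<^sup>2 * ?P\<^sup>2) + \<alpha> / (n i ^ 3 * uw i) * (uw i * ?G + n i * ?P)\<^sup>2"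
    using descent_step_ineq[OF n_pos[of i] uw_pos[of i] alpha_pos l_pos] by presburger
  then show ?thesis
    using estimation_error_term_le[of k i] tracking_error_term_le[of i k] increment_term_le[of i k]
    by linarith
qed

lemma strong_monotonicity_at_xbar: "l * Exbar k \<le> (\<Sum>i\<in>UNIV. (xbar k i - ys $ i) * Q_xbar k i)"
proof -
  have "l * Exbar k \<le> (xbar_vec k - ys) \<bullet> (Qmap coal f (xbar_vec k) - Qmap coal f ys)"
    using A3 by (simp flip: power2_norm_xbar_vec_diff)
  also have "\<dots> = (\<Sum>i\<in>UNIV. (xbar k i - ys $ i) * Q_xbar k i)"
    by (simp add: inner_vec_def xbar_vec_def Q_xbar_eq_Qmap Qmap_nash_eq_zero[OF differentiable NE])
  finally show ?thesis .
qed

lemma sum_Exi_coal: "(\<Sum>i\<in>UNIV. Exi_coal k i) = Exi k"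
proof -
  have "Exi k = (\<Sum>i\<in>UNIV. \<Sum>v\<in>{v\<in>UNIV. coal v = i}. (norm (\<xi> k v - Xbar k))\<^sup>2)"
    unfolding Exi_def by (rule sum.group[symmetric]) auto
  then show ?thesis
    by (simp add: Exi_coal_def agents_def)
qed

lemma sum_Epsi_coal: "(\<Sum>i\<in>UNIV. Epsi_coal k i) = Epsi k"
  by (simp add: Epsi_def Epsi_coal_def)

lemma Vx_Suc_le:
  "Vx (Suc k) - Vx k \<le> - l * Exbar k + beta_xpsi * Epsi k + beta_xxi * Exi k
     + \<alpha> * Max (range b1) * (Epsi k + Exi k + real CARD('c) * Exbar k)"
proof -
  have "Vx (Suc k) - Vx k \<le> (\<Sum>i\<in>UNIV. - 2 * (xbar k i - ys $ i) * Q_xbar k i + l * (xbar k i - ys $ i)\<^sup>2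
       + beta_xxi * Exi_coal k i + beta_xpsi * Epsi_coal k i
       + \<alpha> * Max (range b1) * (Epsi_coal k i + Exi_coal k i + Exbar k))"
    unfolding Vx_def sum_subtractf[symmetric] by (intro sum_mono Vx_coalition_step)
  also have "\<dots> = - 2 * (\<Sum>i\<in>UNIV. (xbar k i - ys $ i) * Q_xbar k i) + l * Exbar k + beta_xxi * Exi k
       + beta_xpsi * Epsi k + \<alpha> * Max (range b1) * (Epsi k + Exi k + real CARD('c) * Exbar k)"
proof -
    have "(\<Sum>i\<in>UNIV. - 2 * (xbar k i - ys $ i) * Q_xbar k i) = - 2 * (\<Sum>i\<in>UNIV. (xbar k i - ys $ i) * Q_xbar k i)"
      by (simp only: sum_distrib_left mult.assoc)
    moreover have "(\<Sum>i\<in>UNIV. \<alpha> * Max (range b1) * (Epsi_coal k i + Exi_coal k i + Exbar k))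
        = \<alpha> * Max (range b1) * (Epsi k + Exi k + real CARD('c) * Exbar k)"
      by (simp add: sum.distrib sum_Exi_coal sum_Epsi_coal flip: sum_distrib_left)
    ultimately show ?thesis
      by (simp only: sum.distrib sum_Exi_coal sum_Epsi_coal Exbar_def flip: sum_distrib_left)
  qed
  finally show ?thesis
    using strong_monotonicity_at_xbar[of k] by linarith
qed

end

theorem lemma2:
  fixes coal :: "'v::finite \<Rightarrow> 'c::finite"
    and E :: "('v \<times> 'v) set"
    and f :: "'v \<Rightarrow> real^'v \<Rightarrow> real"
    and lc :: "'v \<Rightarrow> real"
    and l \<alpha> :: real
    and r cw :: "'v \<Rightarrow> 'v \<Rightarrow> real"
    and x :: "nat \<Rightarrow> real^'v"
    and \<xi> :: "nat \<Rightarrow> 'v \<Rightarrow> real^'v"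
    and \<psi> :: "nat \<Rightarrow> 'v \<Rightarrow> 'v \<Rightarrow> real"
    and u w :: "'v \<Rightarrow> real"
    and ys :: "real^'c"
    and k :: nat
  assumes coal_nonempty: "\<forall>i. agents coal i \<noteq> {}"
    \<comment> \<open>(A1)\<close>
    and A1_G: "strongly_connected_on UNIV E"
    and A1_Gi: "\<forall>i. strongly_connected_on (agents coal i) E"
    \<comment> \<open>(A2)\<close>
    and A2_convex: "\<forall>v. convex_on UNIV (f v)"
    and A2_C2: "\<forall>v. C2 (f v)"
    and A2_lip: "\<forall>v. lipschitz_on (lc v) UNIV (grad (f v))"
    \<comment> \<open>(A3)\<close>
    and l_pos: "l > 0"
    and A3: "\<forall>a b. (a - b) \<bullet> (Qmap coal f a - Qmap coal f b) \<ge> l * (norm (a - b))\<^sup>2"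
    \<comment> \<open>Nash equilibrium\<close>
    and NE: "nash_eq coal f ys"
    \<comment> \<open>weights: R_i row stochastic on in-neighbours in G_i, C_i column stochastic on out-neighbours\<close>
    and r_pos: "\<forall>ij im. coal im = coal ij \<longrightarrow> im \<in> coal_in_nbrs E coal ij \<union> {ij} \<longrightarrow> r ij im > 0"
    and r_zero: "\<forall>ij im. coal im = coal ij \<longrightarrow> im \<notin> coal_in_nbrs E coal ij \<union> {ij} \<longrightarrow> r ij im = 0"
    and r_sum: "\<forall>ij. (\<Sum>im\<in>agents coal (coal ij). r ij im) = 1"
    and c_pos: "\<forall>ij im. coal im = coal ij \<longrightarrow> im \<in> coal_out_nbrs E coal ij \<union> {ij} \<longrightarrow> cw im ij > 0"
    and c_zero: "\<forall>ij im. coal im = coal ij \<longrightarrow> im \<notin> coal_out_nbrs E coal ij \<union> {ij} \<longrightarrow> cw im ij = 0"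
    and c_sum: "\<forall>ij. (\<Sum>im\<in>agents coal (coal ij). cw im ij) = 1"
    and alpha_pos: "\<alpha> > 0"
    \<comment> \<open>initialisation (x 0 and \<xi> 0 arbitrary)\<close>
    and init_psi: "\<forall>ij il. coal il = coal ij \<longrightarrow> \<psi> 0 ij il = pd (f ij) il (\<xi> 0 ij)"
    \<comment> \<open>updates\<close>
    and upd_x: "\<forall>k ij. x (Suc k) $ ij =
        (\<Sum>im\<in>agents coal (coal ij). r ij im * x k $ im)
        - \<alpha> / real (nc coal (coal ij)) * (\<Sum>im\<in>agents coal (coal ij). \<psi> k ij im)"
    and upd_xi: "\<forall>k ij pq. \<xi> (Suc k) ij $ pq = \<xi> k ij $ pq
        - 1 / (indeg E ij + adj E ij pq) *
          ((\<Sum>lm\<in>in_nbrs E ij. \<xi> k ij $ pq - \<xi> k lm $ pq)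
           + adj E ij pq * (\<xi> k ij $ pq - x k $ pq))"
    and upd_psi: "\<forall>k ij il. coal il = coal ij \<longrightarrow> \<psi> (Suc k) ij il =
        (\<Sum>im\<in>agents coal (coal ij). cw ij im * \<psi> k im il)
        + pd (f ij) il (\<xi> (Suc k) ij) - pd (f ij) il (\<xi> k ij)"
    \<comment> \<open>left Perron vector u_i of R_i and right Perron vector v_i (here w) of C_i\<close>
    and u_left: "\<forall>im. (\<Sum>ij\<in>agents coal (coal im). u ij * r ij im) = u im"
    and u_norm: "\<forall>i. (\<Sum>ij\<in>agents coal i. u ij) = real (nc coal i)"
    and w_right: "\<forall>ij. (\<Sum>im\<in>agents coal (coal ij). cw ij im * w im) = w ij"
    and w_norm: "\<forall>i. (\<Sum>ij\<in>agents coal i. w ij) = real (nc coal i)"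
  shows "let
      n = \<lambda>i. real (nc coal i);
      unorm2 = \<lambda>i. (\<Sum>j\<in>agents coal i. (u j)\<^sup>2);
      wnorm2 = \<lambda>i. (\<Sum>j\<in>agents coal i. (w j)\<^sup>2);
      uw = \<lambda>i. (\<Sum>j\<in>agents coal i. u j * w j);
      L2 = \<lambda>i. (\<Sum>j\<in>agents coal i. (lc j)\<^sup>2);
      beta_xpsi = 2 / l * Max (range (\<lambda>i. n i ^ 3 * unorm2 i / (uw i)\<^sup>2));
      beta_xxi = 2 / l * Max (range (\<lambda>i. n i * L2 i));
      b0 = \<lambda>i. n i + (1 / n i + Max (range n)) * wnorm2 i * L2 i;
      b1 = \<lambda>i. unorm2 i / (n i * uw i) * b0 i;
      xbar = \<lambda>k i. (\<Sum>j\<in>agents coal i. u j * x k $ j) / n i;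
      Xbar = \<lambda>k. (\<chi> v. xbar k (coal v)) :: real^'v;
      psibar = \<lambda>k i il. (\<Sum>j\<in>agents coal i. \<psi> k j il) / n i;
      Epsi = \<lambda>k. (\<Sum>i\<in>UNIV. \<Sum>j\<in>agents coal i. \<Sum>il\<in>agents coal i.
                      (\<psi> k j il - w j * psibar k i il)\<^sup>2);
      Exbar = \<lambda>k. (\<Sum>i\<in>UNIV. (xbar k i - ys $ i)\<^sup>2);
      Exi = \<lambda>k. (\<Sum>j\<in>UNIV. (norm (\<xi> k j - Xbar k))\<^sup>2);
      Vx = \<lambda>k. (\<Sum>i\<in>UNIV. n i ^ 3 / (\<alpha> * uw i) * (xbar k i - ys $ i)\<^sup>2)
    in Vx (Suc k) - Vx k \<le> - l * Exbar k + beta_xpsi * Epsi k + beta_xxi * Exi k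
           + \<alpha> * Max (range b1) * (Epsi k + Exi k + real CARD('c) * Exbar k)"
proof -
  interpret coalition_nash_seeking coal E f lc l \<alpha> r cw x \<xi> \<psi> u w ys
    by (rule coalition_nash_seeking.intro) (fact assms | use A2_C2 in \<open>simp add: C2_def\<close>)+
  show ?thesis
    using Vx_Suc_le[of k]
    unfolding Let_def n_def unorm2_def wnorm2_def uw_def L2_def beta_xpsi_def beta_xxi_def b0_def b1_def
      xbar_def Xbar_def psibar_def Epsi_def Exbar_def Exi_def Vx_def .
qed

end
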